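(* Let $n\geq 0$. There does not exist a set $\Phi$ of modal formulas such that, for every transitive Kripke frame $\mathcal{F}$, every formula of $\Phi$ is valid in $\mathcal{F}$ if and only if $\mathcal{F}$ has circumference at most $n$.
   Context: Modal formulas are built from a denumerable set of propositional variables using $\top,\bot,\neg,\land,\lor,\to$ and unary modalities $\Diamond,\Box$. A (Kripke) frame is $\mathcal{F}=(W,R)$ with $R$ a binary relation on a set $W$; a model on it adds a valuation $V$ assigning subsets of $W$ to variables; truth sets are defined inductively with Boolean connectives interpreted set-theoretically, $\Diamond\varphi$ true at $x$ iff some $R$-successor of $x$ satisfies $\varphi$, and $\Box\varphi$ true at $x$ iff all $R$-successors of $x$ satisfy $\varphi$. A formula is valid in $\mathcal{F}$ if it is true at every point of every model on $\mathcal{F}$. A frame is transitive if $R$ is transitive. A cycle of length $m\geq 1$ is a sequence $x_1,\dots,x_m$ of distinct points with $x_1Rx_2R\cdots Rx_mRx_1$; the circumference of a frame is the supremum of the lengths of its cycles (0 if there are none). *)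

theory Defs
  imports Main "HOL-Library.Extended_Nat"
begin

datatype fm = Var nat | Top | Bot | Neg fm | And fm fm | Or fm fm | Imp fm fm
  | Dia fm | Box fm

definition kframe :: "'a set \<Rightarrow> ('a \<times> 'a) set \<Rightarrow> bool" where
  "kframe W R \<longleftrightarrow> R \<subseteq> W \<times> W"

fun sat :: "'a set \<Rightarrow> ('a \<times> 'a) set \<Rightarrow> (nat \<Rightarrow> 'a set) \<Rightarrow> 'a \<Rightarrow> fm \<Rightarrow> bool" where
  "sat W R V x (Var p) = (x \<in> V p)"
| "sat W R V x Top = True"
| "sat W R V x Bot = False"
| "sat W R V x (Neg a) = (\<not> sat W R V x a)"
| "sat W R V x (And a b) = (sat W R V x a \<and> sat W R V x b)"
| "sat W R V x (Or a b) = (sat W R V x a \<or> sat W R V x b)"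
| "sat W R V x (Imp a b) = (sat W R V x a \<longrightarrow> sat W R V x b)"
| "sat W R V x (Dia a) = (\<exists>y\<in>W. (x, y) \<in> R \<and> sat W R V y a)"
| "sat W R V x (Box a) = (\<forall>y\<in>W. (x, y) \<in> R \<longrightarrow> sat W R V y a)"

definition valid :: "'a set \<Rightarrow> ('a \<times> 'a) set \<Rightarrow> fm \<Rightarrow> bool" where
  "valid W R a \<longleftrightarrow> (\<forall>V. (\<forall>p. V p \<subseteq> W) \<longrightarrow> (\<forall>x\<in>W. sat W R V x a))"

definition is_cycle :: "('a \<times> 'a) set \<Rightarrow> 'a list \<Rightarrow> bool" where
  "is_cycle R xs \<longleftrightarrow> xs \<noteq> [] \<and> distinct xs
     \<and> (\<forall>i. Suc i < length xs \<longrightarrow> (xs ! i, xs ! Suc i) \<in> R)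
     \<and> (last xs, hd xs) \<in> R"

text \<open>Circumference: supremum of cycle lengths (0 if none), in extended naturals.\<close>
definition circumference :: "('a \<times> 'a) set \<Rightarrow> enat" where
  "circumference R = Sup {enat (length xs) | xs. is_cycle R xs}"

end

theory Submission
  imports Defs
begin

text \<open>Validity is preserved under surjective p-morphisms, and the strict order
  \<open>(\<omega>, <)\<close> maps onto a cluster of \<open>n + 1\<close> points by \<open>i \<mapsto> i mod (n + 1)\<close>. The
  strict order has no cycles, so its circumference is \<open>0 \<le> n\<close> and it validates
  \<open>\<Phi>\<close>; hence so does the cluster, whose \<open>n + 1\<close> points form a cycle.\<close>

definition p_morphism ::
    "'a set \<Rightarrow> ('a \<times> 'a) set \<Rightarrow> 'b set \<Rightarrow> ('b \<times> 'b) set \<Rightarrow> ('a \<Rightarrow> 'b) \<Rightarrow> bool" where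
  "p_morphism W R W' R' f \<longleftrightarrow>
     (\<forall>x\<in>W. f x \<in> W')
   \<and> (\<forall>x\<in>W. \<forall>y\<in>W. (x, y) \<in> R \<longrightarrow> (f x, f y) \<in> R')
   \<and> (\<forall>x\<in>W. \<forall>z\<in>W'. (f x, z) \<in> R' \<longrightarrow> (\<exists>y\<in>W. (x, y) \<in> R \<and> f y = z))"

lemma sat_p_morphism:
  assumes f: "p_morphism W R W' R' f" and "x \<in> W"
  shows "sat W' R' V (f x) \<phi> \<longleftrightarrow> sat W R (\<lambda>p. {y\<in>W. f y \<in> V p}) x \<phi>"
  using \<open>x \<in> W\<close>
proof (induction \<phi> arbitrary: x)
  case (Dia \<phi>)
  have "(\<exists>z\<in>W'. (f x, z) \<in> R' \<and> sat W' R' V z \<phi>)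
          \<longleftrightarrow> (\<exists>y\<in>W. (x, y) \<in> R \<and> sat W' R' V (f y) \<phi>)"
    using f \<open>x \<in> W\<close> unfolding p_morphism_def by blast
  then show ?case
    using Dia.IH by auto
next
  case (Box \<phi>)
  have "(\<forall>z\<in>W'. (f x, z) \<in> R' \<longrightarrow> sat W' R' V z \<phi>)
          \<longleftrightarrow> (\<forall>y\<in>W. (x, y) \<in> R \<longrightarrow> sat W' R' V (f y) \<phi>)"
    using f \<open>x \<in> W\<close> unfolding p_morphism_def by blast
  then show ?case
    using Box.IH by auto
qed simp_all

lemma validD:
  assumes "valid W R \<phi>" "\<forall>p. V p \<subseteq> W" "x \<in> W"
  shows "sat W R V x \<phi>"
  using assms unfolding valid_def by blast

lemma valid_p_morphic_image:
  assumes f: "p_morphism W R W' R' f" and onto: "f ` W = W'" and "valid W R \<phi>"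
  shows "valid W' R' \<phi>"
  unfolding valid_def
proof (intro allI impI ballI)
  fix V :: "nat \<Rightarrow> _" and z assume "z \<in> W'"
  then obtain x where "x \<in> W" "z = f x" using onto by auto
  moreover have "sat W R (\<lambda>p. {y\<in>W. f y \<in> V p}) x \<phi>"
    by (rule validD[OF \<open>valid W R \<phi>\<close> _ \<open>x \<in> W\<close>]) blast
  ultimately show "sat W' R' V z \<phi>"
    using sat_p_morphism[OF f] by simp
qed

lemma p_morphism_onto_cluster:
  assumes "\<And>x. x \<in> W \<Longrightarrow> f x \<in> W'"
    and "\<And>x z. x \<in> W \<Longrightarrow> z \<in> W' \<Longrightarrow> \<exists>y\<in>W. (x, y) \<in> R \<and> f y = z"
  shows "p_morphism W R W' (W' \<times> W') f"
  unfolding p_morphism_def using assms by blast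

lemma is_cycle_in_trancl:
  assumes "is_cycle R xs"
  shows "(hd xs, hd xs) \<in> R\<^sup>+"
proof -
  have "(hd xs, xs ! i) \<in> R\<^sup>*" if "i < length xs" for i
    using that
  proof (induction i)
    case 0
    then show ?case by (simp add: hd_conv_nth)
  next
    case (Suc i)
    then show ?case
      using assms unfolding is_cycle_def by (meson Suc_lessD rtrancl.rtrancl_into_rtrancl)
  qed
  then have "(hd xs, last xs) \<in> R\<^sup>*"
    using assms unfolding is_cycle_def by (simp add: last_conv_nth)
  moreover have "(last xs, hd xs) \<in> R"
    using assms unfolding is_cycle_def by blast
  ultimately show ?thesis by (rule rtrancl_into_trancl1)
qed

lemma circumference_acyclic:
  assumes "acyclic R"
  shows "circumference R = 0"
proof -
  have "\<not> is_cycle R xs" for xs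
    using is_cycle_in_trancl assms unfolding acyclic_def by blast
  then show ?thesis
    unfolding circumference_def by (simp add: bot_enat_def)
qed

lemma length_le_circumference:
  assumes "is_cycle R xs"
  shows "enat (length xs) \<le> circumference R"
  unfolding circumference_def using assms by (blast intro: Sup_upper)

lemma is_cycle_complete:
  assumes "xs \<noteq> []" "distinct xs" "set xs \<times> set xs \<subseteq> R"
  shows "is_cycle R xs"
  using assms unfolding is_cycle_def by (auto intro: nth_mem)

lemma card_le_circumference_Times:
  assumes "finite A"
  shows "enat (card A) \<le> circumference (A \<times> A)"
proof -
  obtain xs where "set xs = A" "distinct xs"
    using finite_distinct_list[OF assms] by blast
  show ?thesis
  proof (cases "xs = []")
    case True
    then show ?thesis using \<open>set xs = A\<close> by (simp add: zero_enat_def[symmetric])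
  next
    case False
    then have "is_cycle (A \<times> A) xs"
      using \<open>set xs = A\<close> \<open>distinct xs\<close> by (intro is_cycle_complete) auto
    then show ?thesis
      using length_le_circumference \<open>set xs = A\<close> \<open>distinct xs\<close> by (metis distinct_card)
  qed
qed

lemma trans_inj_image_less:
  fixes g :: "nat \<Rightarrow> 'a"
  assumes "inj g"
  shows "trans {(g i, g j) | i j. i < j}"
  unfolding trans_def using assms by (auto dest: injD) (metis injD less_trans)

lemma acyclic_inj_image_less:
  fixes g :: "nat \<Rightarrow> 'a"
  assumes "inj g"
  shows "acyclic {(g i, g j) | i j. i < j}"
proof -
  have "acyclic (converse {(g i, g j) | i j. i < j})"
    by (rule acyclicI_order[where f = "inv g"]) (auto simp: inv_f_f[OF assms])
  then show ?thesis by simp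
qed

lemma p_morphism_inj_image_mod:
  fixes g :: "nat \<Rightarrow> 'a"
  assumes "inj g"
  shows "p_morphism (range g) {(g i, g j) | i j. i < j}
           (g ` {..n}) (g ` {..n} \<times> g ` {..n}) (\<lambda>x. g (inv g x mod Suc n))"
proof (rule p_morphism_onto_cluster)
  fix x z assume "x \<in> range g" "z \<in> g ` {..n}"
  then obtain i m where "x = g i" "z = g m" "m \<le> n" by auto
  define j where "j = Suc i * Suc n + m"
  have "i < j"
    unfolding j_def by (simp add: less_Suc_eq_le trans_le_add1)
  moreover have "j mod Suc n = m"
    unfolding j_def using \<open>m \<le> n\<close> by (metis le_imp_less_Suc mod_less mod_mult_self3)
  ultimately show "\<exists>y\<in>range g. (x, y) \<in> {(g i, g j) | i j. i < j} \<and> g (inv g y mod Suc n) = z"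
    using \<open>x = g i\<close> \<open>z = g m\<close> by (intro bexI[of _ "g j"]) (auto simp: inv_f_f[OF assms])
qed auto

lemma inj_image_mod_range:
  fixes g :: "nat \<Rightarrow> 'a"
  assumes "inj g"
  shows "(\<lambda>x. g (inv g x mod Suc n)) ` range g = g ` {..n}"
proof
  show "(\<lambda>x. g (inv g x mod Suc n)) ` range g \<subseteq> g ` {..n}"
    by (auto simp: less_Suc_eq_le)
  show "g ` {..n} \<subseteq> (\<lambda>x. g (inv g x mod Suc n)) ` range g"
  proof
    fix z assume "z \<in> g ` {..n}"
    then obtain m where "m \<le> n" "z = g m" by auto
    then have "z = g (inv g (g m) mod Suc n)"
      by (simp add: inv_f_f[OF assms])
    then show "z \<in> (\<lambda>x. g (inv g x mod Suc n)) ` range g" by blast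
  qed
qed

theorem theorem2:
  fixes n :: nat
  assumes "infinite (UNIV :: 'w set)"
  shows "\<not> (\<exists>\<Phi> :: fm set. \<forall>(W :: 'w set) R. kframe W R \<and> trans R \<longrightarrow>
            ((\<forall>\<phi>\<in>\<Phi>. valid W R \<phi>) \<longleftrightarrow> circumference R \<le> enat n))"
proof
  assume "\<exists>\<Phi> :: fm set. \<forall>(W :: 'w set) R. kframe W R \<and> trans R \<longrightarrow>
            ((\<forall>\<phi>\<in>\<Phi>. valid W R \<phi>) \<longleftrightarrow> circumference R \<le> enat n)"
  then obtain \<Phi> where \<Phi>: "\<And>(W :: 'w set) R. kframe W R \<Longrightarrow> trans R \<Longrightarrow>
            (\<forall>\<phi>\<in>\<Phi>. valid W R \<phi>) \<longleftrightarrow> circumference R \<le> enat n" by blast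
  obtain g :: "nat \<Rightarrow> 'w" where "inj g"
    using assms infinite_countable_subset by blast
  define chain where "chain = {(g i, g j) | i j. i < j}"
  define cluster where "cluster = g ` {..n}"
  have chain_frame: "kframe (range g) chain" "trans chain"
    unfolding kframe_def chain_def using trans_inj_image_less[OF \<open>inj g\<close>] by auto
  have "circumference chain = 0"
    unfolding chain_def using acyclic_inj_image_less[OF \<open>inj g\<close>] by (rule circumference_acyclic)
  then have "\<forall>\<phi>\<in>\<Phi>. valid (range g) chain \<phi>"
    using \<Phi>[OF chain_frame] by (simp add: zero_enat_def)
  moreover have "p_morphism (range g) chain cluster (cluster \<times> cluster) (\<lambda>x. g (inv g x mod Suc n))"
    unfolding chain_def cluster_def using \<open>inj g\<close> by (rule p_morphism_inj_image_mod)
  moreover have "(\<lambda>x. g (inv g x mod Suc n)) ` range g = cluster"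
    unfolding cluster_def using \<open>inj g\<close> by (rule inj_image_mod_range)
  ultimately have "\<forall>\<phi>\<in>\<Phi>. valid cluster (cluster \<times> cluster) \<phi>"
    using valid_p_morphic_image by blast
  then have "circumference (cluster \<times> cluster) \<le> enat n"
    using \<Phi>[of cluster "cluster \<times> cluster"] unfolding kframe_def trans_def by blast
  moreover have "card cluster = Suc n"
    unfolding cluster_def using \<open>inj g\<close> by (simp add: card_image inj_on_subset[OF _ subset_UNIV])
  then have "enat (Suc n) \<le> circumference (cluster \<times> cluster)"
    using card_le_circumference_Times[of cluster] unfolding cluster_def by simp
  ultimately show False
    using order_trans by (metis Suc_n_not_le_n enat_ord_simps(1))
qed

end
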